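(* Let $k$ and $r$ be integers with $k\ge r\ge 0$ and $r\ne 1$, and let $d=\gcd(r-1,k)$. Let $D$ be a strongly connected digraph such that every directed cycle of $D$ has length congruent to $r$ modulo $k$. If $k/d$ is even, then $\chi_A(D)\le 2$.
   Context: Digraphs are finite and loopless; cycles are directed. $\chi_A(D)$ is the minimum number of colors in a vertex coloring of $D$ in which every color class induces an acyclic subdigraph. *)

theory Defs
  imports Main
begin

definition digraph :: "'a set \<Rightarrow> ('a \<times> 'a) set \<Rightarrow> bool" where
  "digraph V A \<longleftrightarrow> finite V \<and> A \<subseteq> V \<times> V \<and> (\<forall>v. (v, v) \<notin> A)"

definition dcycle :: "'a set \<Rightarrow> ('a \<times> 'a) set \<Rightarrow> 'a list \<Rightarrow> bool" where
  "dcycle V A cs \<longleftrightarrow> cs \<noteq> [] \<and> distinct cs \<and> set cs \<subseteq> V \<and>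
     (\<forall>i < length cs. (cs ! i, cs ! ((i + 1) mod length cs)) \<in> A)"

definition strongly_connected :: "'a set \<Rightarrow> ('a \<times> 'a) set \<Rightarrow> bool" where
  "strongly_connected V A \<longleftrightarrow> V \<noteq> {} \<and> (\<forall>u\<in>V. \<forall>v\<in>V. (u, v) \<in> A\<^sup>*)"

definition induced_arcs :: "('a \<times> 'a) set \<Rightarrow> 'a set \<Rightarrow> ('a \<times> 'a) set" where
  "induced_arcs A S = A \<inter> (S \<times> S)"

definition acyclic_digraph :: "'a set \<Rightarrow> ('a \<times> 'a) set \<Rightarrow> bool" where
  "acyclic_digraph V A \<longleftrightarrow> (\<nexists>cs. dcycle V A cs)"

definition acyclic_coloring :: "'a set \<Rightarrow> ('a \<times> 'a) set \<Rightarrow> ('a \<Rightarrow> nat) \<Rightarrow> nat \<Rightarrow> bool" where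
  "acyclic_coloring V A c m \<longleftrightarrow> (\<forall>v\<in>V. c v < m) \<and>
     (\<forall>i < m. acyclic_digraph {v\<in>V. c v = i} (induced_arcs A {v\<in>V. c v = i}))"

definition dichromatic_number :: "'a set \<Rightarrow> ('a \<times> 'a) set \<Rightarrow> nat" where
  "dichromatic_number V A = (LEAST m. \<exists>c. acyclic_coloring V A c m)"

end

theory Submission
  imports Defs
begin

text \<open>
  Run a depth-first search and let \<open>h\<close> be the depth in the search tree. An arc \<open>(u, w)\<close>
  that goes back to an ancestor \<open>w\<close> of \<open>u\<close> closes a cycle of length \<open>h u - h w + 1\<close>; every
  other arc goes forward in the reverse finishing order, so every cycle contains a back arc.
  With \<open>d = gcd (r - 1) k\<close>, the hypotheses force every cycle length to be \<open>d + 1\<close> modulo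
  \<open>2 d\<close>, so across each back arc \<open>h\<close> changes by \<open>d\<close> modulo \<open>2 d\<close>. Colouring \<open>v\<close> by whether
  \<open>h v mod 2 d\<close> lies below \<open>d\<close> therefore makes every back arc, hence every cycle, bichromatic.
\<close>

definition dpath :: "('a \<times> 'a) set \<Rightarrow> 'a list \<Rightarrow> bool" where
  "dpath A p \<longleftrightarrow> distinct p \<and> (\<forall>i. Suc i < length p \<longrightarrow> (p ! i, p ! Suc i) \<in> A)"

lemma dpath_drop: "dpath A p \<Longrightarrow> dpath A (drop j p)"
  unfolding dpath_def by auto

lemma dpath_snoc:
  assumes "dpath A p" "p = [] \<or> (last p, w) \<in> A" "w \<notin> set p"
  shows "dpath A (p @ [w])"
  unfolding dpath_def
proof (intro conjI allI impI)
  show "distinct (p @ [w])" using assms(1,3) by (simp add: dpath_def)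
  fix i assume i: "Suc i < length (p @ [w])"
  show "((p @ [w]) ! i, (p @ [w]) ! Suc i) \<in> A"
  proof (cases "Suc i < length p")
    case True
    then show ?thesis using assms(1) by (simp add: dpath_def nth_append)
  next
    case False
    then have "length p = Suc i" using i by simp
    then have "last p = p ! i" using last_conv_nth[of p] by fastforce
    then show ?thesis using assms(2) \<open>length p = Suc i\<close> by (auto simp: nth_append)
  qed
qed

lemma dpath_butlast_restrict:
  assumes "dpath A (p @ [v])" "set p \<subseteq> S"
  shows "dpath (A \<inter> S \<times> S) p"
  unfolding dpath_def
proof (intro conjI allI impI)
  show "distinct p" using assms(1) by (simp add: dpath_def)
  fix i assume i: "Suc i < length p"
  then have "((p @ [v]) ! i, (p @ [v]) ! Suc i) \<in> A" using assms(1) by (simp add: dpath_def)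
  then show "(p ! i, p ! Suc i) \<in> A \<inter> S \<times> S"
    using i assms(2) nth_mem[of i p] nth_mem[of "Suc i" p] by (auto simp: nth_append)
qed

lemma dcycle_if_dpath_closed:
  assumes "dpath A p" "p \<noteq> []" "set p \<subseteq> V" "(last p, hd p) \<in> A"
  shows "dcycle V A p"
  unfolding dcycle_def
proof (intro conjI allI impI)
  fix i assume i: "i < length p"
  show "(p ! i, p ! ((i + 1) mod length p)) \<in> A"
  proof (cases "Suc i < length p")
    case True
    then show ?thesis using assms(1) by (simp add: dpath_def)
  next
    case False
    then have "Suc i = length p" "i = length p - 1" using i by simp_all
    then show ?thesis using assms(2,4) by (simp add: last_conv_nth hd_conv_nth)
  qed
qed (use assms in \<open>auto simp: dpath_def\<close>)

lemma dcycle_mono: "dcycle V A cs \<Longrightarrow> V \<subseteq> V' \<Longrightarrow> A \<subseteq> A' \<Longrightarrow> dcycle V' A' cs"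
  unfolding dcycle_def by blast

text \<open>\<open>h\<close> is the depth in a DFS tree and \<open>\<sigma>\<close> the reverse finishing order.\<close>
definition dfs_labelling :: "'a set \<Rightarrow> ('a \<times> 'a) set \<Rightarrow> ('a \<Rightarrow> nat) \<Rightarrow> ('a \<Rightarrow> int) \<Rightarrow> bool" where
  "dfs_labelling V A \<sigma> h \<longleftrightarrow>
     (\<forall>(u, w) \<in> A. \<sigma> w \<le> \<sigma> u \<longrightarrow> (\<exists>cs. dcycle V A cs \<and> int (length cs) = h u - h w + 1))"

lemma dfs_labelling_retreat:
  assumes fin: "finite V" and arcs: "A \<subseteq> V \<times> V"
    and path: "dpath A (P @ [v])" "set (P @ [v]) \<subseteq> V"
    and closed: "\<forall>w. (v, w) \<in> A \<longrightarrow> w \<in> set (P @ [v])"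
    and lab: "dfs_labelling (V - {v}) (A \<inter> (V - {v}) \<times> (V - {v})) \<sigma> h"
    and stack: "\<forall>i < length P. h (P ! i) = int i"
  defines "\<sigma>' \<equiv> \<sigma>(v := Suc (\<Sum>x \<in> V - {v}. \<sigma> x))" and "h' \<equiv> h(v := int (length P))"
  shows "dfs_labelling V A \<sigma>' h' \<and> (\<forall>i < length (P @ [v]). h' ((P @ [v]) ! i) = int i)"
proof
  have vP: "v \<notin> set P" using path(1) by (simp add: dpath_def)
  show stack': "\<forall>i < length (P @ [v]). h' ((P @ [v]) ! i) = int i"
  proof (intro allI impI)
    fix i assume "i < length (P @ [v])"
    then consider "i < length P" | "i = length P" by fastforce
    then show "h' ((P @ [v]) ! i) = int i"
      by cases (use stack vP nth_mem in \<open>auto simp: h'_def nth_append\<close>)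
  qed
  show "dfs_labelling V A \<sigma>' h'"
    unfolding dfs_labelling_def
  proof (intro ballI impI, clarify)
    fix u w assume uw: "(u, w) \<in> A" and desc: "\<sigma>' w \<le> \<sigma>' u"
    show "\<exists>cs. dcycle V A cs \<and> int (length cs) = h' u - h' w + 1"
    proof (cases "u = v")
      case True
      then obtain j where j: "j < length (P @ [v])" "(P @ [v]) ! j = w"
        using closed uw by (meson in_set_conv_nth)
      define cs where "cs = drop j (P @ [v])"
      have "cs \<noteq> []" "hd cs = w" "last cs = u"
        using j True by (simp_all add: cs_def hd_drop_conv_nth del: drop_append)
      moreover have "set cs \<subseteq> V" using path(2) set_drop_subset by (fastforce simp: cs_def)
      moreover have "dpath A cs" using path(1) unfolding cs_def by (rule dpath_drop)
      ultimately have "dcycle V A cs"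
        using uw by (intro dcycle_if_dpath_closed) auto
      moreover have "int (length cs) = h' u - h' w + 1"
        using stack' j True by (auto simp: cs_def h'_def)
      ultimately show ?thesis by blast
    next
      case False
      have "w \<noteq> v"
      proof
        assume "w = v"
        have "\<sigma> u \<le> (\<Sum>x \<in> V - {v}. \<sigma> x)"
          using False uw arcs fin by (intro member_le_sum) auto
        then show False using desc \<open>w = v\<close> False by (simp add: \<sigma>'_def)
      qed
      then have "(u, w) \<in> A \<inter> (V - {v}) \<times> (V - {v})" "\<sigma> w \<le> \<sigma> u"
        using uw desc False arcs by (auto simp: \<sigma>'_def)
      then obtain cs where "dcycle (V - {v}) (A \<inter> (V - {v}) \<times> (V - {v})) cs"
          "int (length cs) = h u - h w + 1"
        using lab unfolding dfs_labelling_def by blast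
      then show ?thesis using False \<open>w \<noteq> v\<close> by (auto simp: h'_def intro: dcycle_mono)
    qed
  qed
qed

lemma dfs_labelling_exists_from_stack:
  assumes "finite V" "A \<subseteq> V \<times> V" "dpath A P" "set P \<subseteq> V"
  shows "\<exists>\<sigma> h. dfs_labelling V A \<sigma> h \<and> (\<forall>i < length P. h (P ! i) = int i)"
  using assms
proof (induction "2 * card V - length P" arbitrary: V A P rule: less_induct)
  case less
  have len: "length P \<le> card V"
    using card_mono[OF less.prems(1,4)] distinct_card[of P] less.prems(3) by (simp add: dpath_def)
  consider (push) w where "w \<in> V - set P" "P = [] \<or> (last P, w) \<in> A"
    | (empty) "V = {}"
    | (retreat) P' v where "P = P' @ [v]" "\<forall>w. (v, w) \<in> A \<longrightarrow> w \<in> set P"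
  proof (cases "\<exists>w \<in> V - set P. P = [] \<or> (last P, w) \<in> A")
    case False
    show thesis
    proof (cases "P = []")
      case True
      then show thesis using False by (intro empty) auto
    next
      case Pne: False
      have "\<forall>w. (last P, w) \<in> A \<longrightarrow> w \<in> set P" using False less.prems(2) by blast
      with Pne show thesis by (intro retreat[of "butlast P" "last P"]) simp_all
    qed
  qed blast
  then show ?case
  proof cases
    case push
    have "card V > 0" using push less.prems(1) by (auto simp: card_gt_0_iff)
    then have "2 * card V - length (P @ [w]) < 2 * card V - length P" using len by simp
    moreover have "dpath A (P @ [w])" using push less.prems(3) by (intro dpath_snoc) auto
    moreover have "set (P @ [w]) \<subseteq> V" using push less.prems(4) by auto
    ultimately obtain \<sigma> h where lab: "dfs_labelling V A \<sigma> h"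
        and stack: "\<forall>i < length (P @ [w]). h ((P @ [w]) ! i) = int i"
      using less.hyps less.prems(1,2) by blast
    have "\<forall>i < length P. h (P ! i) = int i"
    proof (intro allI impI)
      fix i assume "i < length P"
      then show "h (P ! i) = int i" using stack[rule_format, of i] by (simp add: nth_append)
    qed
    with lab show ?thesis by blast
  next
    case empty
    then have "A = {}" using less.prems(2) by blast
    then show ?thesis using empty less.prems(4) by (simp add: dfs_labelling_def)
  next
    case retreat
    define V' where "V' = V - {v}"
    have vV: "v \<in> V" and P'V': "set P' \<subseteq> V'"
      using retreat(1) less.prems(3,4) by (auto simp: V'_def dpath_def)
    have "card V' = card V - 1" using vV less.prems(1) by (simp add: V'_def)
    moreover have "card V > 0" using vV less.prems(1) by (auto simp: card_gt_0_iff)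
    ultimately have "2 * card V' - length P' < 2 * card V - length P"
      using retreat(1) len by simp
    moreover have "dpath (A \<inter> V' \<times> V') P'"
      using retreat(1) less.prems(3) P'V' by (intro dpath_butlast_restrict) auto
    moreover have "finite V'" using less.prems(1) by (simp add: V'_def)
    ultimately obtain \<sigma> h where "dfs_labelling V' (A \<inter> V' \<times> V') \<sigma> h"
        "\<forall>i < length P'. h (P' ! i) = int i"
      using less.hyps[where V=V' and A="A \<inter> V' \<times> V'" and P=P'] P'V' by blast
    then show ?thesis
      using dfs_labelling_retreat[of V A P' v] less.prems retreat unfolding V'_def by blast
  qed
qed

lemma dfs_labelling_exists:
  assumes "finite V" "A \<subseteq> V \<times> V"
  obtains \<sigma> h where "dfs_labelling V A \<sigma> h"
  using dfs_labelling_exists_from_stack[OF assms, of "[]"] by (auto simp: dpath_def)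

lemma cyclic_sequence_has_descent:
  fixes f :: "nat \<Rightarrow> nat"
  assumes "n > 0"
  shows "\<exists>j < n. f ((j + 1) mod n) \<le> f j"
proof (rule ccontr)
  assume "\<not> ?thesis"
  then have step: "f j < f ((j + 1) mod n)" if "j < n" for j using that by (simp add: not_le)
  have grow: "f 0 + j \<le> f j" if "j < n" for j
    using that
  proof (induction j)
    case (Suc j)
    then show ?case using step[of j] by simp
  qed simp
  have "f 0 + (n - 1) \<le> f (n - 1)" using grow[of "n - 1"] assms by simp
  moreover have "f (n - 1) < f 0" using step[of "n - 1"] assms by simp
  ultimately show False by simp
qed

lemma acyclic_coloring_if_descents_bichromatic:
  fixes \<sigma> :: "'a \<Rightarrow> nat"
  assumes "\<forall>v \<in> V. c v < m" and bichromatic: "\<forall>(u, w) \<in> A. \<sigma> w \<le> \<sigma> u \<longrightarrow> c u \<noteq> c w"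
  shows "acyclic_coloring V A c m"
  unfolding acyclic_coloring_def
proof (intro conjI allI impI assms(1))
  fix i
  show "acyclic_digraph {v \<in> V. c v = i} (induced_arcs A {v \<in> V. c v = i})"
    unfolding acyclic_digraph_def
  proof
    assume "\<exists>cs. dcycle {v \<in> V. c v = i} (induced_arcs A {v \<in> V. c v = i}) cs"
    then obtain cs where cs: "dcycle {v \<in> V. c v = i} (induced_arcs A {v \<in> V. c v = i}) cs" ..
    define n where "n = length cs"
    have "n > 0" using cs by (simp add: dcycle_def n_def)
    then obtain j where j: "j < n" "\<sigma> (cs ! ((j + 1) mod n)) \<le> \<sigma> (cs ! j)"
      using cyclic_sequence_has_descent[of n "\<lambda>j. \<sigma> (cs ! j)"] by blast
    then have "(cs ! j, cs ! ((j + 1) mod n)) \<in> induced_arcs A {v \<in> V. c v = i}"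
      using cs by (simp add: dcycle_def n_def)
    then show False using bichromatic j(2) by (auto simp: induced_arcs_def)
  qed
qed

lemma dichromatic_number_le: "acyclic_coloring V A c m \<Longrightarrow> dichromatic_number V A \<le> m"
  unfolding dichromatic_number_def by (blast intro: Least_le)

lemma lower_half_mod_iff_not:
  fixes x y d :: int
  assumes "d > 0" "(x - y) mod (2 * d) = d"
  shows "x mod (2 * d) < d \<longleftrightarrow> \<not> y mod (2 * d) < d"
proof -
  define b where "b = y mod (2 * d)"
  have b: "0 \<le> b" "b < 2 * d" using assms(1) by (simp_all add: b_def)
  have x: "x mod (2 * d) = (b + d) mod (2 * d)"
    using mod_add_eq[of "x - y" "2 * d" y] assms(2) by (simp add: b_def add.commute)
  show ?thesis
  proof (cases "b < d")
    case True
    then show ?thesis using b x by (simp add: b_def)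
  next
    case False
    have "(b + d) mod (2 * d) = ((b - d) + 2 * d) mod (2 * d)" by (simp add: add.commute)
    also have "\<dots> = b - d" using False b by (simp only: mod_add_self2) simp
    finally show ?thesis using False b x by (simp add: b_def)
  qed
qed

lemma minus_one_mod_twice_gcd:
  fixes n r k :: int
  assumes "r \<noteq> 1" "even (k div gcd (r - 1) k)" "n mod k = r mod k"
  shows "(n - 1) mod (2 * gcd (r - 1) k) = gcd (r - 1) k"
proof -
  define d where "d = gcd (r - 1) k"
  have "2 * d dvd k"
    using assms(2) by (metis d_def dvd_mult_div_cancel gcd_dvd2 mult.commute mult_dvd_mono dvd_refl)
  then have "2 * d dvd (n - 1) - (r - 1)"
    using assms(3) by (metis diff_diff_eq2 diff_add_cancel dvd_trans mod_eq_dvd_iff)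
  then have "(n - 1) mod (2 * d) = (r - 1) mod (2 * d)" by (simp add: mod_eq_dvd_iff)
  also have "r - 1 = d * ((r - 1) div d)" by (simp add: d_def)
  also have "odd ((r - 1) div d)"
    using div_gcd_coprime[of "r - 1" k] assms by (auto simp: d_def)
  then have "(d * ((r - 1) div d)) mod (2 * d) = d"
    by (metis mult.commute mult.right_neutral mult_mod_right odd_iff_mod_2_eq_one)
  finally show ?thesis by (simp add: d_def)
qed

theorem dichromatic_number_le_2_if_cycle_lengths:
  fixes d :: int
  assumes "finite V" "A \<subseteq> V \<times> V" "d > 0"
    and cycles: "\<forall>cs. dcycle V A cs \<longrightarrow> (int (length cs) - 1) mod (2 * d) = d"
  shows "dichromatic_number V A \<le> 2"
proof -
  obtain \<sigma> h where lab: "dfs_labelling V A \<sigma> h" using dfs_labelling_exists assms(1,2) .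
  define c where "c v = (if h v mod (2 * d) < d then 0 else 1 :: nat)" for v
  have bichromatic: "c u \<noteq> c w" if descent: "(u, w) \<in> A" "\<sigma> w \<le> \<sigma> u" for u w
  proof -
    obtain cs where "dcycle V A cs" "int (length cs) = h u - h w + 1"
      using lab descent unfolding dfs_labelling_def by blast
    then have "(h u - h w) mod (2 * d) = d" using cycles by force
    then show ?thesis using lower_half_mod_iff_not[OF \<open>d > 0\<close>] by (simp add: c_def)
  qed
  moreover have "\<forall>v \<in> V. c v < 2" by (simp add: c_def)
  ultimately have "acyclic_coloring V A c 2"
    by (intro acyclic_coloring_if_descents_bichromatic[where \<sigma> = \<sigma>]) auto
  then show ?thesis by (rule dichromatic_number_le)
qed

theorem mainTheorem19:
  fixes V :: "'a set" and A :: "('a \<times> 'a) set" and k r :: int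
  assumes "digraph V A"
    and "k \<ge> r" and "r \<ge> 0" and "r \<noteq> 1"
    and "strongly_connected V A"
    and "\<forall>cs. dcycle V A cs \<longrightarrow> int (length cs) mod k = r mod k"
    and "even (k div gcd (r - 1) k)"
  shows "dichromatic_number V A \<le> 2"
proof (rule dichromatic_number_le_2_if_cycle_lengths)
  show "finite V" "A \<subseteq> V \<times> V" using assms(1) by (simp_all add: digraph_def)
  show "gcd (r - 1) k > 0" using assms(4) by simp
  show "\<forall>cs. dcycle V A cs \<longrightarrow> (int (length cs) - 1) mod (2 * gcd (r - 1) k) = gcd (r - 1) k"
    using assms(4,6,7) minus_one_mod_twice_gcd by blast
qed

end
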